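(* Let $\mathcal{B}=\bigcup_{s>0}\mathcal{B}_s$, where $\mathcal{B}_s$ is the set of irrational real numbers satisfying the one-dimensional Bruno-$s$ condition. Then $\mathcal{B}$ is invariant under the action of $PSL(2,\mathbb{Z})$: for all integers $a,b,c,d$ with $ad-bc=1$ and all $\omega\in\mathcal{B}$, $(a\omega+b)/(c\omega+d)\in\mathcal{B}$.
   Context: For an irrational real $\omega$, let $(q_j)_{j\ge0}$ be the denominators of the continued fraction convergents of $\omega$ (equivalently of its fractional part): $q_{-1}=0$, $q_0=1$, $q_{k+1}=a_{k+1}q_k+q_{k-1}$ with $(a_k)$ the partial quotients. $\omega$ satisfies the one-dimensional Bruno-$s$ condition ($s>0$) if $\limsup_{N\to+\infty}\big(\sum_{j=0}^{k(N)}\frac{\log q_{j+1}}{q_j}-s\log N\big)<+\infty$, where $k(N)$ is defined by $q_{k(N)}\le N<q_{k(N)+1}$. *)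

theory Defs
  imports "HOL-Analysis.Analysis" "HOL-Library.Liminf_Limsup"
begin

text \<open>Complete quotients of the continued fraction expansion:
  x_0 = omega, x_(n+1) = 1 / frac(x_n).  Partial quotients a_n = floor x_n.\<close>
fun cf_rem :: "real \<Rightarrow> nat \<Rightarrow> real" where
  "cf_rem \<omega> 0 = \<omega>"
| "cf_rem \<omega> (Suc n) = 1 / frac (cf_rem \<omega> n)"

definition cf_a :: "real \<Rightarrow> nat \<Rightarrow> nat" where
  "cf_a \<omega> n = nat \<lfloor>cf_rem \<omega> n\<rfloor>"

text \<open>Denominators of convergents: q_(-1) = 0, q_0 = 1, q_(k+1) = a_(k+1) q_k + q_(k-1).\<close>
fun cf_q :: "real \<Rightarrow> nat \<Rightarrow> nat" where
  "cf_q \<omega> 0 = 1"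
| "cf_q \<omega> (Suc 0) = cf_a \<omega> 1 * 1 + 0"
| "cf_q \<omega> (Suc (Suc n)) = cf_a \<omega> (Suc (Suc n)) * cf_q \<omega> (Suc n) + cf_q \<omega> n"

definition cf_k :: "real \<Rightarrow> nat \<Rightarrow> nat" where
  "cf_k \<omega> N = (THE k. cf_q \<omega> k \<le> N \<and> N < cf_q \<omega> (Suc k))"

definition bruno_s :: "real \<Rightarrow> real \<Rightarrow> bool" where
  "bruno_s s \<omega> \<longleftrightarrow> \<omega> \<notin> \<rat> \<and>
     limsup (\<lambda>N::nat. ereal ((\<Sum>j=0..cf_k \<omega> N. ln (real (cf_q \<omega> (Suc j))) / real (cf_q \<omega> j))
                               - s * ln (real N))) < \<infinity>"

definition bruno_set :: "real set" where
  "bruno_set = (\<Union>s\<in>{s. s > 0}. {\<omega>. bruno_s s \<omega>})"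

end

(* Numbers related by an element of PSL(2,Z) have continued fraction expansions with a
   common tail: the group is generated by x + 1 and -1/x, and each of these changes only the
   first few complete quotients.  Once the complete quotients agree from some index on, the
   convergent denominators of the two numbers obey the same linear recurrence with positive
   coefficients, so they are comparable up to a constant factor C.  Then every term
   ln q_(j+1) / q_j of one Bruno sum is at most a constant multiple D of the corresponding term
   of the other, k(N) for one number is dominated by k(C N) for the other, and the Bruno-s
   condition becomes a Bruno-(D s) condition. *)

theory Submission
  imports Defs
begin

section \<open>Complete quotients and convergent denominators\<close>

lemma cf_rem_in_Rats_iff: "cf_rem \<omega> n \<in> \<rat> \<longleftrightarrow> \<omega> \<in> \<rat>"
  by (induction n) (simp_all add: divide_inverse)

lemma cf_rem_add: "cf_rem \<omega> (m + n) = cf_rem (cf_rem \<omega> m) n"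
  by (induction n) simp_all

lemma cf_rem_gt_1:
  assumes "\<omega> \<notin> \<rat>" and "0 < n"
  shows "1 < cf_rem \<omega> n"
proof -
  obtain m where n: "n = Suc m"
    using \<open>0 < n\<close> gr0_implies_Suc by blast
  have "cf_rem \<omega> m \<notin> \<int>"
    using assms(1) Ints_subset_Rats cf_rem_in_Rats_iff by blast
  then have "0 < frac (cf_rem \<omega> m)"
    by simp
  with frac_lt_1 show ?thesis
    by (simp add: n)
qed

lemma cf_a_pos: "\<omega> \<notin> \<rat> \<Longrightarrow> 0 < n \<Longrightarrow> 0 < cf_a \<omega> n"
  using cf_rem_gt_1[of \<omega> n] unfolding cf_a_def by linarith

lemma cf_q_pos: "\<omega> \<notin> \<rat> \<Longrightarrow> 0 < cf_q \<omega> n"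
  by (induction \<omega> n rule: cf_q.induct) (simp_all add: cf_a_pos)

lemma cf_q_Suc_Suc_ge: "\<omega> \<notin> \<rat> \<Longrightarrow> cf_q \<omega> (Suc n) + cf_q \<omega> n \<le> cf_q \<omega> (Suc (Suc n))"
  using cf_a_pos[of \<omega> "Suc (Suc n)"] by simp

lemma cf_q_mono: "\<omega> \<notin> \<rat> \<Longrightarrow> mono (cf_q \<omega>)"
proof (rule mono_iff_le_Suc[THEN iffD2], intro allI)
  fix n
  assume irr: "\<omega> \<notin> \<rat>"
  show "cf_q \<omega> n \<le> cf_q \<omega> (Suc n)"
  proof (cases n)
    case 0
    then show ?thesis
      using cf_a_pos[OF irr, of 1] by simp
  next
    case (Suc m)
    show ?thesis
      unfolding Suc using cf_q_Suc_Suc_ge[OF irr, of m] by linarith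
  qed
qed

lemma cf_q_ge_index: "\<omega> \<notin> \<rat> \<Longrightarrow> n \<le> cf_q \<omega> n"
proof (induction \<omega> n rule: cf_q.induct)
  case (3 \<omega> n)
  then show ?case
    using cf_q_Suc_Suc_ge[of \<omega> n] cf_q_pos[of \<omega> n] by linarith
qed (simp_all add: cf_a_pos Suc_le_eq)

lemma cf_q_index_le:
  assumes "\<omega> \<notin> \<rat>" and "cf_q \<omega> m \<le> N" and "N < cf_q \<omega> (Suc k)"
  shows "m \<le> k"
proof (rule ccontr)
  assume "\<not> m \<le> k"
  then have "cf_q \<omega> (Suc k) \<le> cf_q \<omega> m"
    by (intro monoD[OF cf_q_mono[OF assms(1)]]) simp
  with assms(2,3) show False
    by linarith
qed

lemma cf_k_bounds:
  assumes "\<omega> \<notin> \<rat>" and "0 < N"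
  shows "cf_q \<omega> (cf_k \<omega> N) \<le> N" and "N < cf_q \<omega> (Suc (cf_k \<omega> N))"
proof -
  define m where "m = (LEAST m. N < cf_q \<omega> m)"
  have "N < cf_q \<omega> (Suc N)"
    using cf_q_ge_index[OF assms(1), of "Suc N"] by simp
  then have m: "N < cf_q \<omega> m"
    unfolding m_def by (rule LeastI)
  have "m \<noteq> 0"
  proof
    assume "m = 0"
    with m \<open>0 < N\<close> show False
      by simp
  qed
  then obtain k where k: "m = Suc k"
    using not0_implies_Suc by blast
  have "\<not> N < cf_q \<omega> k"
    using not_less_Least[of k "\<lambda>m. N < cf_q \<omega> m"] k unfolding m_def by simp
  with m k have k_bounds: "cf_q \<omega> k \<le> N \<and> N < cf_q \<omega> (Suc k)"
    by simp
  then have "cf_k \<omega> N = k"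
    unfolding cf_k_def
    by (rule the_equality) (meson cf_q_index_le[OF assms(1)] k_bounds antisym)
  with k_bounds show "cf_q \<omega> (cf_k \<omega> N) \<le> N" and "N < cf_q \<omega> (Suc (cf_k \<omega> N))"
    by simp_all
qed

lemma le_cf_k:
  assumes "\<omega> \<notin> \<rat>" and "cf_q \<omega> m \<le> N"
  shows "m \<le> cf_k \<omega> N"
proof -
  have "0 < N"
    using assms cf_q_pos[of \<omega> m] by linarith
  with assms show ?thesis
    using cf_q_index_le cf_k_bounds(2) by blast
qed

section \<open>Numbers with a common tail\<close>

definition cf_tail_equiv :: "real \<Rightarrow> real \<Rightarrow> bool" where
  "cf_tail_equiv x y \<longleftrightarrow> (\<exists>i j. cf_rem x i = cf_rem y j)"

lemma cf_tail_equiv_trans: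
  assumes "cf_tail_equiv x y" and "cf_tail_equiv y z"
  shows "cf_tail_equiv x z"
proof -
  obtain i j j' k where xy: "cf_rem x i = cf_rem y j" and yz: "cf_rem y j' = cf_rem z k"
    using assms unfolding cf_tail_equiv_def by blast
  have "cf_rem x (i + j') = cf_rem y (j + j')"
    by (simp add: cf_rem_add xy)
  also have "\<dots> = cf_rem z (k + j)"
    by (simp only: add.commute[of j] cf_rem_add yz)
  finally show ?thesis
    unfolding cf_tail_equiv_def by blast
qed

lemma cf_tail_equiv_Rats_iff: "cf_tail_equiv x y \<Longrightarrow> x \<in> \<rat> \<longleftrightarrow> y \<in> \<rat>"
  unfolding cf_tail_equiv_def by (metis cf_rem_in_Rats_iff)

lemma cf_tail_equiv_add_of_int: "cf_tail_equiv (y + of_int k) y"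
proof -
  have "cf_rem (y + of_int k) 1 = cf_rem y 1"
    by simp
  then show ?thesis
    unfolding cf_tail_equiv_def by blast
qed

lemma cf_tail_equiv_uminus:
  assumes "y \<notin> \<rat>"
  shows "cf_tail_equiv (- y) y"
proof -
  define f where "f = frac y"
  have f: "0 < f" "f < 1"
    using assms Ints_subset_Rats frac_lt_1[of y] unfolding f_def by auto
  have "f \<notin> \<rat>"
    using assms by (simp add: f_def)
  then have "f \<noteq> 1 / 2"
    by (metis Rats_1 Rats_divide Rats_number_of)
  have y1: "cf_rem y 1 = 1 / f"
    by (simp add: f_def)
  have neg1: "cf_rem (- y) 1 = 1 / (1 - f)"
    using assms Ints_subset_Rats by (auto simp: f_def frac_neg)
  \<comment> \<open>The second complete quotients of y and -y are 1/f and 1/(1 - f); the one lying in (1, 2) produces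
    an extra partial quotient 1, after which the two expansions agree.\<close>
  consider "f < 1 / 2" | "1 / 2 < f"
    using \<open>f \<noteq> 1 / 2\<close> by linarith
  then show ?thesis
  proof cases
    case 1
    have "cf_rem (- y) 2 = 1 / frac (1 / (1 - f))"
      using neg1 by (simp add: numeral_2_eq_2)
    also have "frac (1 / (1 - f)) = f / (1 - f)"
      unfolding frac_unique_iff using 1 f by (auto simp: field_simps)
    finally have "cf_rem (- y) 2 = 1 / f - 1"
      using f by (simp add: field_simps)
    then have "cf_rem (- y) 3 = cf_rem y 2"
      using y1 by (simp add: numeral_3_eq_3 numeral_2_eq_2 frac_1_eq[of "1 / f - 1", simplified])
    then show ?thesis
      unfolding cf_tail_equiv_def by blast
  next
    case 2
    have "cf_rem y 2 = 1 / frac (1 / f)"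
      using y1 by (simp add: numeral_2_eq_2)
    also have "frac (1 / f) = (1 - f) / f"
      unfolding frac_unique_iff using 2 f by (auto simp: field_simps)
    finally have "cf_rem y 2 = 1 / (1 - f) - 1"
      using f by (simp add: field_simps)
    then have "cf_rem y 3 = cf_rem (- y) 2"
      using neg1 by (simp add: numeral_3_eq_3 numeral_2_eq_2 frac_1_eq[of "1 / (1 - f) - 1", simplified])
    then show ?thesis
      unfolding cf_tail_equiv_def by metis
  qed
qed

lemma cf_tail_equiv_inverse:
  assumes "y \<notin> \<rat>" and "0 < y"
  shows "cf_tail_equiv (1 / y) y"
proof (cases "y < 1")
  case True
  with assms have "cf_rem (1 / y) 0 = cf_rem y 1"
    by (simp add: frac_eq)
  then show ?thesis
    unfolding cf_tail_equiv_def by blast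
next
  case False
  with assms have "1 < y"
    by (metis Rats_1 linorder_neqE_linordered_idom)
  then have "cf_rem (1 / y) 1 = cf_rem y 0"
    by (simp add: frac_eq)
  then show ?thesis
    unfolding cf_tail_equiv_def by blast
qed

lemma cf_tail_equiv_minus_inverse:
  assumes "y \<notin> \<rat>"
  shows "cf_tail_equiv (- 1 / y) y"
proof (cases "0 < y")
  case True
  have "cf_tail_equiv (- (1 / y)) (1 / y)"
    using assms by (intro cf_tail_equiv_uminus) (simp add: divide_inverse)
  with cf_tail_equiv_inverse[OF assms True] show ?thesis
    by (auto intro: cf_tail_equiv_trans)
next
  case False
  with assms have "0 < - y"
    by (metis Rats_0 neg_0_less_iff_less not_less_iff_gr_or_eq)
  moreover have "- y \<notin> \<rat>"
    using assms by simp
  ultimately have "cf_tail_equiv (1 / - y) (- y)"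
    by (intro cf_tail_equiv_inverse)
  with cf_tail_equiv_uminus[OF assms] show ?thesis
    by (auto intro: cf_tail_equiv_trans)
qed

lemma mobius_denominator_nonzero:
  fixes a b c d :: int
  assumes "y \<notin> \<rat>" and "a * d - b * c = 1"
  shows "of_int c * y + of_int d \<noteq> 0"
proof
  assume zero: "of_int c * y + of_int d = 0"
  show False
  proof (cases "c = 0")
    case True
    with zero assms(2) show False
      by simp
  next
    case False
    with zero have "y = - of_int d / of_int c"
      by (simp add: field_simps add_eq_0_iff)
    with assms(1) show False
      by simp
  qed
qed

lemma cf_tail_equiv_mobius:
  fixes a b c d :: int
  assumes "y \<notin> \<rat>" and "a * d - b * c = 1"
  shows "cf_tail_equiv ((of_int a * y + of_int b) / (of_int c * y + of_int d)) y"
  using assms(2)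
proof (induction "nat \<bar>c\<bar>" arbitrary: a b c d rule: less_induct)
  case less
  show ?case
  proof (cases "c = 0")
    case True
    with less.prems have "(a = 1 \<and> d = 1) \<or> (a = -1 \<and> d = -1)"
      by (simp add: zmult_eq_1_iff)
    then have "(of_int a * y + of_int b) / (of_int c * y + of_int d) = y + of_int (a * b)"
      using True by (auto simp: field_simps)
    then show ?thesis
      using cf_tail_equiv_add_of_int[of y "a * b"] by simp
  next
    case False
    \<comment> \<open>Euclid's algorithm on (a, c): with a = k c + r the map is k - 1/h, where h is the
      image of y under a matrix with lower left entry r.\<close>
    define k r where "k = a div c" and "r = a mod c"
    have a: "a = k * c + r"
      by (simp add: k_def r_def)
    have "nat \<bar>r\<bar> < nat \<bar>c\<bar>"
      using abs_mod_less[OF False, of a] by (simp add: r_def)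
    moreover have det: "(- c) * (b - k * d) - (- d) * r = 1"
      using less.prems unfolding a by (simp add: algebra_simps)
    ultimately have IH: "cf_tail_equiv h y"
      if "h = (of_int (- c) * y + of_int (- d)) / (of_int r * y + of_int (b - k * d))" for h
      using less.hyps that by blast
    define P Q where "P = of_int c * y + of_int d" and "Q = of_int r * y + of_int (b - k * d)"
    have "P \<noteq> 0" and "Q \<noteq> 0"
      using mobius_denominator_nonzero[OF assms(1)] less.prems det unfolding P_def Q_def by blast+
    have "of_int a * y + of_int b = of_int k * P + Q"
      unfolding P_def Q_def a by (simp add: algebra_simps)
    with \<open>P \<noteq> 0\<close> \<open>Q \<noteq> 0\<close> have mobius_eq: "(of_int a * y + of_int b) / P = - 1 / (- P / Q) + of_int k"
      by (simp add: field_simps)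
    have equiv: "cf_tail_equiv (- P / Q) y"
      by (rule IH) (simp add: P_def Q_def minus_divide_left)
    then have "- P / Q \<notin> \<rat>"
      using assms(1) cf_tail_equiv_Rats_iff by blast
    then show ?thesis
      unfolding P_def[symmetric] mobius_eq
      by (intro cf_tail_equiv_trans[OF cf_tail_equiv_add_of_int]
          cf_tail_equiv_trans[OF cf_tail_equiv_minus_inverse equiv])
  qed
qed

section \<open>Bruno sums along a common tail\<close>

lemma linear_recurrence_le_mult:
  fixes x y c :: "nat \<Rightarrow> nat"
  assumes x_rec: "\<And>n. x (Suc (Suc n)) = c n * x (Suc n) + x n"
    and y_rec: "\<And>n. y (Suc (Suc n)) = c n * y (Suc n) + y n"
    and "x 0 \<le> C * y 0" and "x 1 \<le> C * y 1"
  shows "x n \<le> C * y n"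
proof -
  have "x n \<le> C * y n \<and> x (Suc n) \<le> C * y (Suc n)"
  proof (induction n)
    case 0
    with assms(3,4) show ?case
      by simp
  next
    case (Suc n)
    then have "x (Suc (Suc n)) \<le> c n * (C * y (Suc n)) + C * y n"
      unfolding x_rec by (intro add_mono mult_left_mono) simp_all
    also have "\<dots> = C * y (Suc (Suc n))"
      unfolding y_rec by (simp add: algebra_simps)
    finally show ?case
      using Suc by simp
  qed
  then show ?thesis
    by simp
qed

lemma cf_q_tail_comparable:
  assumes "\<omega> \<notin> \<rat>" and tails: "cf_rem \<omega>' i = cf_rem \<omega> j"
  obtains C :: nat where "1 \<le> C"
    and "\<And>n. cf_q \<omega>' (i + n) \<le> C * cf_q \<omega> (j + n)"
    and "\<And>n. cf_q \<omega> (j + n) \<le> C * cf_q \<omega>' (i + n)"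
proof -
  have "\<omega>' \<notin> \<rat>"
    using assms cf_rem_in_Rats_iff by metis
  define x y where "x n = cf_q \<omega>' (i + n)" and "y n = cf_q \<omega> (j + n)" for n
  define c where "c n = cf_a \<omega> (j + Suc (Suc n))" for n
  have "cf_a \<omega>' (i + n) = cf_a \<omega> (j + n)" for n
    by (simp add: cf_a_def cf_rem_add tails)
  then have x_rec: "x (Suc (Suc n)) = c n * x (Suc n) + x n"
    and y_rec: "y (Suc (Suc n)) = c n * y (Suc n) + y n" for n
    unfolding x_def y_def c_def by (metis add_Suc_right cf_q.simps(3))+
  define C where "C = max (max (x 0) (x 1)) (max (y 0) (y 1))"
  have x_pos: "0 < x n" and y_pos: "0 < y n" for n
    unfolding x_def y_def using cf_q_pos \<open>\<omega>' \<notin> \<rat>\<close> \<open>\<omega> \<notin> \<rat>\<close> by blast+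
  have "C \<le> C * x n" and "C \<le> C * y n" for n
    using mult_le_mono2[of 1 _ C] x_pos[of n] y_pos[of n] by simp_all
  moreover have "x n \<le> C" and "y n \<le> C" if "n \<le> 1" for n
    using that by (cases n; simp add: C_def)+
  ultimately have base: "x n \<le> C * y n" "y n \<le> C * x n" if "n \<le> 1" for n
    using that le_trans by blast+
  have "x n \<le> C * y n" for n
    by (rule linear_recurrence_le_mult[where x = x and y = y, OF x_rec y_rec]) (simp_all add: base)
  moreover have "y n \<le> C * x n" for n
    by (rule linear_recurrence_le_mult[where x = y and y = x, OF y_rec x_rec]) (simp_all add: base)
  moreover have "1 \<le> C"
    using x_pos[of 0] by (simp add: C_def)
  ultimately show ?thesis
    using that unfolding x_def y_def by blast
qed

lemma ln_div_le_of_comparable: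
  fixes X0 X1 Y0 Y1 C :: real
  assumes "0 < X0" "0 < X1" "0 < Y0" "2 \<le> Y1" "1 \<le> C"
    and "X1 \<le> C * Y1" and "Y0 \<le> C * X0"
  shows "ln X1 / X0 \<le> C * (1 + ln C / ln 2) * (ln Y1 / Y0)"
proof -
  define E where "E = (1 + ln C / ln 2) * ln Y1"
  have "0 < ln (2::real)" and "ln 2 \<le> ln Y1" and "0 \<le> ln C"
    using assms by simp_all
  have "ln C \<le> ln C / ln 2 * ln Y1"
    using \<open>ln 2 \<le> ln Y1\<close> \<open>0 \<le> ln C\<close> by (simp add: le_divide_eq mult.commute mult_left_mono)
  moreover have "ln X1 \<le> ln (C * Y1)"
    using assms by simp
  moreover have "ln (C * Y1) = ln C + ln Y1"
    using assms by (simp add: ln_mult)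
  ultimately have "ln X1 \<le> E"
    unfolding E_def by (simp add: algebra_simps)
  have "0 \<le> E"
    unfolding E_def using \<open>0 < ln 2\<close> \<open>ln 2 \<le> ln Y1\<close> \<open>0 \<le> ln C\<close>
    by (intro mult_nonneg_nonneg add_nonneg_nonneg divide_nonneg_pos) linarith+
  have "ln X1 / X0 \<le> E * (1 / X0)"
    using \<open>ln X1 \<le> E\<close> \<open>0 < X0\<close> by (simp add: divide_right_mono)
  also have "\<dots> \<le> E * (C / Y0)"
    using assms \<open>0 \<le> E\<close> by (intro mult_left_mono) (simp_all add: field_simps)
  also have "\<dots> = C * (1 + ln C / ln 2) * (ln Y1 / Y0)"
    by (simp add: E_def)
  finally show ?thesis .
qed

definition cf_bruno_term :: "real \<Rightarrow> nat \<Rightarrow> real" where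
  "cf_bruno_term \<omega> j = ln (real (cf_q \<omega> (Suc j))) / real (cf_q \<omega> j)"

lemma cf_bruno_term_nonneg: "\<omega> \<notin> \<rat> \<Longrightarrow> 0 \<le> cf_bruno_term \<omega> j"
  using cf_q_pos[of \<omega>] by (simp add: cf_bruno_term_def Suc_le_eq)

lemma bruno_s_bounded:
  assumes "bruno_s s \<omega>"
  obtains B where "\<And>N. (\<Sum>j=0..cf_k \<omega> N. cf_bruno_term \<omega> j) - s * ln (real N) \<le> B"
proof -
  have "limsup (\<lambda>N. ereal ((\<Sum>j=0..cf_k \<omega> N. cf_bruno_term \<omega> j) - s * ln (real N))) < \<infinity>"
    using assms unfolding bruno_s_def cf_bruno_term_def by simp
  from limsup_finite_then_bounded[OF this] show ?thesis
    using that by blast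
qed

lemma bruno_sI:
  assumes "\<omega> \<notin> \<rat>"
    and "\<forall>\<^sub>F N in sequentially. (\<Sum>j=0..cf_k \<omega> N. cf_bruno_term \<omega> j) - s * ln (real N) \<le> B"
  shows "bruno_s s \<omega>"
proof -
  have "limsup (\<lambda>N. ereal ((\<Sum>j=0..cf_k \<omega> N. cf_bruno_term \<omega> j) - s * ln (real N))) \<le> ereal B"
    using assms(2) by (intro Limsup_bounded) simp
  then have "limsup (\<lambda>N. ereal ((\<Sum>j=0..cf_k \<omega> N. cf_bruno_term \<omega> j) - s * ln (real N))) < \<infinity>"
    by (rule le_less_trans) simp
  with assms(1) show ?thesis
    unfolding bruno_s_def cf_bruno_term_def by simp
qed

lemma sum_atMost_le_shifted:
  fixes f g :: "nat \<Rightarrow> real"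
  assumes fg: "\<And>n. f (i + n) \<le> D * g (j + n)" and "\<And>t. 0 \<le> g t" and "0 \<le> D"
    and "i \<le> K" and "j + (K - i) \<le> L"
  shows "(\<Sum>t\<le>K. f t) \<le> (\<Sum>t<i. f t) + D * (\<Sum>t\<le>L. g t)"
proof -
  have shifted: "(\<Sum>t<i + m. f t) \<le> (\<Sum>t<i. f t) + D * (\<Sum>t<j + m. g t)" for m
  proof (induction m)
    case 0
    with assms(2,3) show ?case
      by (simp add: sum_nonneg)
  next
    case (Suc m)
    with fg[of m] show ?case
      by (simp add: algebra_simps)
  qed
  have "(\<Sum>t\<le>K. f t) = (\<Sum>t<i + Suc (K - i). f t)"
    using \<open>i \<le> K\<close> by (simp add: lessThan_Suc_atMost Suc_diff_le)
  also have "\<dots> \<le> (\<Sum>t<i. f t) + D * (\<Sum>t<j + Suc (K - i). g t)"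
    by (rule shifted)
  also have "(\<Sum>t<j + Suc (K - i). g t) \<le> (\<Sum>t\<le>L. g t)"
    using assms(2,5) by (intro sum_mono2) auto
  finally show ?thesis
    using \<open>0 \<le> D\<close> by (simp add: mult_left_mono)
qed

lemma cf_bruno_term_tail_le:
  assumes "\<omega> \<notin> \<rat>" and "\<omega>' \<notin> \<rat>" and "1 \<le> C"
    and qC: "\<And>n. cf_q \<omega>' (i + n) \<le> C * cf_q \<omega> (Suc j + n)"
    and Cq: "\<And>n. cf_q \<omega> (Suc j + n) \<le> C * cf_q \<omega>' (i + n)"
  shows "cf_bruno_term \<omega>' (i + n) \<le> C * (1 + ln C / ln 2) * cf_bruno_term \<omega> (Suc j + n)"
  unfolding cf_bruno_term_def
proof (rule ln_div_le_of_comparable)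
  show "2 \<le> real (cf_q \<omega> (Suc (Suc j + n)))"
    using cf_q_ge_index[OF assms(1), of "Suc (Suc j + n)"] by (simp del: cf_q.simps)
  show "real (cf_q \<omega>' (Suc (i + n))) \<le> real C * real (cf_q \<omega> (Suc (Suc j + n)))"
    using qC[of "Suc n"] by (simp del: cf_q.simps flip: of_nat_mult)
  show "real (cf_q \<omega> (Suc j + n)) \<le> real C * real (cf_q \<omega>' (i + n))"
    using Cq[of n] by (simp del: cf_q.simps flip: of_nat_mult)
qed (use assms(3) cf_q_pos[OF assms(1)] cf_q_pos[OF assms(2)] in \<open>simp_all del: cf_q.simps\<close>)

lemma cf_bruno_sum_tail_le:
  assumes "\<omega> \<notin> \<rat>" and "\<omega>' \<notin> \<rat>" and "0 \<le> D"
    and term_le: "\<And>n. cf_bruno_term \<omega>' (i + n) \<le> D * cf_bruno_term \<omega> (j + n)"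
    and Cq: "\<And>n. cf_q \<omega> (j + n) \<le> C * cf_q \<omega>' (i + n)"
    and "cf_q \<omega>' i \<le> N"
  shows "(\<Sum>t=0..cf_k \<omega>' N. cf_bruno_term \<omega>' t)
    \<le> (\<Sum>t<i. cf_bruno_term \<omega>' t) + D * (\<Sum>t=0..cf_k \<omega> (C * N). cf_bruno_term \<omega> t)"
proof -
  define K where "K = cf_k \<omega>' N"
  have "i \<le> K"
    unfolding K_def using le_cf_k[OF assms(2,6)] .
  have "0 < N"
    using assms(6) cf_q_pos[OF assms(2), of i] by linarith
  have "cf_q \<omega> (j + (K - i)) \<le> C * cf_q \<omega>' K"
    using Cq[of "K - i"] \<open>i \<le> K\<close> by simp
  also have "\<dots> \<le> C * N"
    using cf_k_bounds(1)[OF assms(2) \<open>0 < N\<close>] unfolding K_def by simp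
  finally have "j + (K - i) \<le> cf_k \<omega> (C * N)"
    by (rule le_cf_k[OF assms(1)])
  with term_le cf_bruno_term_nonneg[OF assms(1)] \<open>0 \<le> D\<close> \<open>i \<le> K\<close> show ?thesis
    unfolding atLeast0AtMost K_def by (intro sum_atMost_le_shifted) auto
qed

lemma bruno_s_cf_tail:
  assumes bruno: "bruno_s s \<omega>" and "0 < s" and tails: "cf_rem \<omega>' i = cf_rem \<omega> j"
  shows "\<exists>s'>0. bruno_s s' \<omega>'"
proof -
  have irr: "\<omega> \<notin> \<rat>"
    using bruno by (simp add: bruno_s_def)
  have irr': "\<omega>' \<notin> \<rat>"
    using irr tails cf_rem_in_Rats_iff by metis
  \<comment> \<open>Shifting by one index makes the denominators of \<omega> inside the logarithms at least 2.\<close>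
  have "cf_rem \<omega>' (Suc i) = cf_rem \<omega> (Suc j)"
    using tails by simp
  with irr obtain C where "1 \<le> C"
    and qC: "\<And>n. cf_q \<omega>' (Suc i + n) \<le> C * cf_q \<omega> (Suc j + n)"
    and Cq: "\<And>n. cf_q \<omega> (Suc j + n) \<le> C * cf_q \<omega>' (Suc i + n)"
    by (rule cf_q_tail_comparable) blast
  define D where "D = real C * (1 + ln (real C) / ln 2)"
  have "0 \<le> ln (real C) / ln 2"
    using \<open>1 \<le> C\<close> by simp
  then have "1 \<le> D"
    using \<open>1 \<le> C\<close> mult_mono[of 1 "real C" 1 "1 + ln (real C) / ln 2"] unfolding D_def by simp
  have term_le: "cf_bruno_term \<omega>' (Suc i + n) \<le> D * cf_bruno_term \<omega> (Suc j + n)" for n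
    unfolding D_def using irr irr' \<open>1 \<le> C\<close> qC Cq by (intro cf_bruno_term_tail_le) simp_all
  obtain B where B: "\<And>N. (\<Sum>t=0..cf_k \<omega> N. cf_bruno_term \<omega> t) - s * ln (real N) \<le> B"
    using bruno_s_bounded[OF bruno] by blast
  define A where "A = (\<Sum>t<Suc i. cf_bruno_term \<omega>' t)"
  have "(\<Sum>t=0..cf_k \<omega>' N. cf_bruno_term \<omega>' t) - D * s * ln (real N) \<le> A + D * (B + s * ln (real C))"
    if N: "cf_q \<omega>' (Suc i) \<le> N" for N
  proof -
    have "0 < N"
      using N cf_q_pos[OF irr', of "Suc i"] by linarith
    have "(\<Sum>t=0..cf_k \<omega>' N. cf_bruno_term \<omega>' t) \<le> A + D * (\<Sum>t=0..cf_k \<omega> (C * N). cf_bruno_term \<omega> t)"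
      unfolding A_def using \<open>1 \<le> D\<close> by (intro cf_bruno_sum_tail_le[OF irr irr' _ term_le Cq N]) simp
    also have "\<dots> \<le> A + D * (B + s * ln (real (C * N)))"
      using B[of "C * N"] \<open>1 \<le> D\<close> by simp
    also have "ln (real (C * N)) = ln (real C) + ln (real N)"
      using \<open>1 \<le> C\<close> \<open>0 < N\<close> by (simp add: ln_mult)
    finally show ?thesis
      by (simp add: algebra_simps)
  qed
  then have "bruno_s (D * s) \<omega>'"
    by (intro bruno_sI[OF irr']) (auto simp: eventually_sequentially)
  with \<open>1 \<le> D\<close> \<open>0 < s\<close> show ?thesis
    by (intro exI[of _ "D * s"]) simp
qed

theorem mainTheorem7:
  fixes a b c d :: int and \<omega> :: real
  assumes "a * d - b * c = 1"
    and "\<omega> \<in> bruno_set"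
  shows "(of_int a * \<omega> + of_int b) / (of_int c * \<omega> + of_int d) \<in> bruno_set"
proof -
  obtain s where "0 < s" and bruno: "bruno_s s \<omega>"
    using assms(2) unfolding bruno_set_def by blast
  then have "\<omega> \<notin> \<rat>"
    by (simp add: bruno_s_def)
  then have "cf_tail_equiv ((of_int a * \<omega> + of_int b) / (of_int c * \<omega> + of_int d)) \<omega>"
    using assms(1) by (rule cf_tail_equiv_mobius)
  then obtain i j where "cf_rem ((of_int a * \<omega> + of_int b) / (of_int c * \<omega> + of_int d)) i = cf_rem \<omega> j"
    unfolding cf_tail_equiv_def by blast
  from bruno_s_cf_tail[OF bruno \<open>0 < s\<close> this] show ?thesis
    unfolding bruno_set_def by blast
qed

end
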